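(* Let $M>1$ be a real number, let $\alpha:(0,M)\to[0,\infty)$ be a log-concave function, and let \[ f(x)=\int_{0}^{M}\alpha(s)\binom{M}{s}(1-x)^{s}x^{M-s}\,ds,\qquad x\in(0,1). \] Then for every $x\in(0,1)$, \[ \frac{M-1}{M}\,f'(x)^{2}\;\ge\; f(x)\,f''(x). \]
   Context: A non-negative function $h$ on an open interval $I$ is called log-concave if for all $x,y\in I$ and all $0<\lambda<1$, $h(\lambda x+(1-\lambda)y)\ge h(x)^{\lambda}h(y)^{1-\lambda}$. For real $a$ and $s$, $\binom{a}{s}=\frac{\Gamma(a+1)}{\Gamma(s+1)\Gamma(a-s+1)}$, where $\Gamma$ is the Gamma function. *)

theory Defs
  imports "HOL-Analysis.Analysis"
begin

definition rbinom :: "real \<Rightarrow> real \<Rightarrow> real" where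
  "rbinom a s = Gamma (a + 1) / (Gamma (s + 1) * Gamma (a - s + 1))"

definition log_concave_on :: "real set \<Rightarrow> (real \<Rightarrow> real) \<Rightarrow> bool" where
  "log_concave_on I h \<longleftrightarrow>
     (\<forall>x\<in>I. h x \<ge> 0) \<and>
     (\<forall>x\<in>I. \<forall>y\<in>I. \<forall>l. 0 < l \<and> l < 1 \<longrightarrow>
        h (l * x + (1 - l) * y) \<ge> h x powr l * h y powr (1 - l))"

end

theory Submission
  imports Defs
begin

(* Write f(x) = int alpha(s) C(M,s) w(s,x) ds with w(s,x) = (1-x)^s x^(M-s), and let A, B, C be the
   integrals of s(s-1), s(M-s), (M-s)(M-s-1) against alpha(s) C(M,s) w(s,x) ds.  Differentiating under
   the integral sign gives
     M(M-1) f = A + 2B + C,   (M-1) x(1-x) f' = -xA + (1-2x)B + (1-x)C,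
     x^2(1-x)^2 f'' = x^2 A - 2x(1-x) B + (1-x)^2 C,
   and then M(M-1) x^2(1-x)^2 ((M-1)/M f'^2 - f f'') = B^2 - AC.  By the recursion of the Gamma
   function the three integrands are alpha(s) Gamma(M+1) w(s,x) / (Gamma(s+a) Gamma(M-s-a)) for
   a = -1, 0, 1.  Since alpha, 1/Gamma and s |-> w(s,x) are log-concave, the product of the a = -1 and
   a = 1 integrands at p and q is at most the square of the a = 0 integrand at (p+q)/2, and the
   one-dimensional Prekopa-Leindler inequality yields AC <= B^2. *)

section \<open>Log-concave functions\<close>

lemma log_concave_on_nonneg: "log_concave_on S \<phi> \<Longrightarrow> s \<in> S \<Longrightarrow> 0 \<le> \<phi> s"
  unfolding log_concave_on_def by auto

lemma log_concave_onD:
  "log_concave_on S \<phi> \<Longrightarrow> p \<in> S \<Longrightarrow> q \<in> S \<Longrightarrow> 0 < l \<Longrightarrow> l < 1 \<Longrightarrow>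
   \<phi> p powr l * \<phi> q powr (1 - l) \<le> \<phi> (l * p + (1 - l) * q)"
  unfolding log_concave_on_def by auto

lemma log_concave_on_subset: "log_concave_on S \<phi> \<Longrightarrow> T \<subseteq> S \<Longrightarrow> log_concave_on T \<phi>"
  unfolding log_concave_on_def by blast

lemma log_concave_on_cong:
  assumes "log_concave_on S \<phi>" "convex S" "\<And>s. s \<in> S \<Longrightarrow> \<phi> s = \<psi> s"
  shows "log_concave_on S \<psi>"
  unfolding log_concave_on_def
proof (intro conjI ballI allI impI)
  fix s assume "s \<in> S" then show "0 \<le> \<psi> s" using assms log_concave_on_nonneg by metis
next
  fix p q l :: real assume p: "p \<in> S" and q: "q \<in> S" and l: "0 < l \<and> l < 1"
  have "l * p + (1 - l) * q \<in> S" using convexD[OF assms(2) p q, of l "1 - l"] l by simp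
  then show "\<psi> p powr l * \<psi> q powr (1 - l) \<le> \<psi> (l * p + (1 - l) * q)"
    using log_concave_onD[OF assms(1) p q, of l] l assms(3)[OF p] assms(3)[OF q] assms(3) by simp
qed

lemma log_concave_on_mult:
  assumes "log_concave_on S \<phi>" "log_concave_on S \<psi>"
  shows "log_concave_on S (\<lambda>s. \<phi> s * \<psi> s)"
  unfolding log_concave_on_def
proof (intro conjI ballI allI impI)
  fix x assume "x \<in> S" then show "0 \<le> \<phi> x * \<psi> x" using assms log_concave_on_nonneg by auto
next
  fix x y l :: real assume xy: "x \<in> S" "y \<in> S" and l: "0 < l \<and> l < 1"
  have "(\<phi> x * \<psi> x) powr l * (\<phi> y * \<psi> y) powr (1 - l)
      = (\<phi> x powr l * \<phi> y powr (1 - l)) * (\<psi> x powr l * \<psi> y powr (1 - l))"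
    by (simp add: powr_mult mult_ac)
  also have "\<dots> \<le> \<phi> (l * x + (1 - l) * y) * \<psi> (l * x + (1 - l) * y)"
  proof (rule mult_mono)
    show "0 \<le> \<phi> (l * x + (1 - l) * y)"
      using log_concave_onD[OF assms(1) xy, of l] l by (meson mult_nonneg_nonneg order_trans powr_ge_zero)
  qed (use l xy assms log_concave_onD in auto)
  finally show "(\<phi> x * \<psi> x) powr l * (\<phi> y * \<psi> y) powr (1 - l)
      \<le> \<phi> (l * x + (1 - l) * y) * \<psi> (l * x + (1 - l) * y)" .
qed

lemma log_concave_on_const: "0 \<le> C \<Longrightarrow> log_concave_on S (\<lambda>s. C)"
  unfolding log_concave_on_def by (cases "C = 0") (auto simp: powr_add[symmetric])

lemma log_concave_on_exp_affine: "log_concave_on S (\<lambda>s. exp (c * s + d))"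
  unfolding log_concave_on_def by (simp add: powr_def exp_add[symmetric] algebra_simps)

lemma Gamma_log_convex:
  fixes x y l :: real
  assumes "0 < x" "0 < y" "0 \<le> l" "l \<le> 1"
  shows "Gamma (l * x + (1 - l) * y) \<le> Gamma x powr l * Gamma y powr (1 - l)"
proof -
  have pos: "0 < l * x + (1 - l) * y"
    using assms by (cases "l = 0") (auto intro: add_pos_nonneg)
  have "ln (Gamma (l * x + (1 - l) * y)) \<le> l * ln (Gamma x) + (1 - l) * ln (Gamma y)"
    using convex_onD[OF log_convex_Gamma_real, of "1 - l" x y] assms by simp
  then have "exp (ln (Gamma (l * x + (1 - l) * y))) \<le> exp (l * ln (Gamma x) + (1 - l) * ln (Gamma y))"
    by simp
  then show ?thesis
    using Gamma_real_pos[OF assms(1)] Gamma_real_pos[OF assms(2)] Gamma_real_pos[OF pos]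
    by (simp add: powr_def exp_add)
qed

lemma log_concave_on_rGamma_affine:
  assumes "\<forall>s\<in>S. 0 < a * s + b"
  shows "log_concave_on S (\<lambda>s. rGamma (a * s + b))"
  unfolding log_concave_on_def rGamma_inverse_Gamma
proof (intro conjI ballI allI impI)
  fix x assume "x \<in> S" then show "0 \<le> inverse (Gamma (a * x + b))"
    using assms Gamma_real_pos[of "a * x + b"] by auto
next
  fix x y l :: real assume xy: "x \<in> S" "y \<in> S" and l: "0 < l \<and> l < 1"
  have pos: "0 < Gamma (a * x + b)" "0 < Gamma (a * y + b)" using xy assms Gamma_real_pos by auto
  have mid: "a * (l * x + (1 - l) * y) + b = l * (a * x + b) + (1 - l) * (a * y + b)"
    by (simp add: algebra_simps)
  moreover have "0 < l * (a * x + b)" "0 < (1 - l) * (a * y + b)" using xy assms l by auto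
  ultimately have "0 < Gamma (a * (l * x + (1 - l) * y) + b)" by (intro Gamma_real_pos) auto
  then have "inverse (Gamma (a * x + b) powr l * Gamma (a * y + b) powr (1 - l))
      \<le> inverse (Gamma (a * (l * x + (1 - l) * y) + b))"
    using Gamma_log_convex[of "a * x + b" "a * y + b" l] xy assms l mid
    by (intro le_imp_inverse_le) auto
  then show "inverse (Gamma (a * x + b)) powr l * inverse (Gamma (a * y + b)) powr (1 - l)
      \<le> inverse (Gamma (a * (l * x + (1 - l) * y) + b))"
    by (simp add: inverse_powr inverse_mult_distrib)
qed

lemma log_concave_on_midpoint:
  assumes "log_concave_on S \<phi>" "p \<in> S" "q \<in> S"
  shows "\<phi> p * \<phi> q \<le> (\<phi> ((p + q) / 2))\<^sup>2"
proof -
  have "\<phi> p powr (1/2) * \<phi> q powr (1/2) \<le> \<phi> ((p + q) / 2)"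
    using log_concave_onD[OF assms, of "1/2"] by (simp add: add_divide_distrib)
  then have "(\<phi> p powr (1/2) * \<phi> q powr (1/2))\<^sup>2 \<le> (\<phi> ((p + q) / 2))\<^sup>2"
    by (intro power_mono) auto
  then show ?thesis
    using log_concave_on_nonneg[OF assms(1,2)] log_concave_on_nonneg[OF assms(1,3)]
    by (simp add: power_mult_distrib powr_half_sqrt)
qed

lemma min_le_weighted_geometric_mean:
  fixes a b l :: real
  assumes "0 \<le> a" "0 \<le> b" "0 < l" "l < 1"
  shows "min a b \<le> a powr l * b powr (1 - l)"
proof (cases "min a b = 0")
  case False
  define m where "m = min a b"
  have m: "0 < m" "m \<le> a" "m \<le> b" using False assms unfolding m_def by auto
  have "m = m powr l * m powr (1 - l)" using m by (simp add: powr_add[symmetric])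
  also have "\<dots> \<le> a powr l * b powr (1 - l)"
    using m assms by (intro mult_mono powr_mono2) auto
  finally show ?thesis unfolding m_def .
qed (use assms in auto)

lemma log_concave_on_ge_min:
  assumes lc: "log_concave_on S \<phi>" and "convex S" "a \<in> S" "b \<in> S" "a \<le> x" "x \<le> b"
  shows "min (\<phi> a) (\<phi> b) \<le> \<phi> x"
proof (cases "a < x \<and> x < b")
  case True
  define l where "l = (b - x) / (b - a)"
  have l: "0 < l" "l < 1" using True unfolding l_def by (auto simp: field_simps)
  have "l * (b - a) = b - x" using True unfolding l_def by simp
  then have "l * a + (1 - l) * b = x" by (simp add: algebra_simps)
  then show ?thesis
    using min_le_weighted_geometric_mean[OF _ _ l, of "\<phi> a" "\<phi> b"]
      log_concave_onD[OF lc assms(3,4) l] log_concave_on_nonneg[OF lc] assms(3,4) by force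
next
  case False
  then show ?thesis using assms(5,6) by (cases "x = a") auto
qed

lemma is_interval_superlevel_log_concave:
  assumes lc: "log_concave_on S \<phi>" and "convex S"
  shows "is_interval {s. t < indicator S s * \<phi> s}"
  unfolding is_interval_1
proof (intro ballI allI impI)
  fix a b x assume a: "a \<in> {s. t < indicator S s * \<phi> s}" and b: "b \<in> {s. t < indicator S s * \<phi> s}"
    and x: "a \<le> x \<and> x \<le> b"
  show "x \<in> {s. t < indicator S s * \<phi> s}"
  proof (cases "t < 0")
    case True then show ?thesis using log_concave_on_nonneg[OF lc, of x] by (cases "x \<in> S") auto
  next
    case False
    then have ab: "a \<in> S" "t < \<phi> a" "b \<in> S" "t < \<phi> b"
      using a b by (auto simp: indicator_def of_bool_def split: if_splits)
    moreover have "x \<in> S"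
      using ab x \<open>convex S\<close> unfolding is_interval_convex_1[symmetric] is_interval_1 by blast
    moreover have "min (\<phi> a) (\<phi> b) \<le> \<phi> x" using log_concave_on_ge_min[OF assms ab(1,3)] x by auto
    ultimately show ?thesis by auto
  qed
qed

lemma borel_measurable_log_concave:
  assumes "log_concave_on S \<phi>" "convex S"
  shows "(\<lambda>s. indicator S s * \<phi> s) \<in> borel_measurable borel"
  unfolding borel_measurable_iff_greater
  using is_interval_superlevel_log_concave[OF assms] real_interval_borel_measurable by auto

lemma log_concave_on_bound_beyond:
  assumes lc: "log_concave_on {lo<..<hi} \<phi>" and in_ivl: "p \<in> {lo<..<hi}" "r \<in> {lo<..<hi}" "s \<in> {lo<..<hi}"
    and pos: "0 < \<phi> p" and between: "p < r \<and> r < s \<or> s < r \<and> r < p"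
  shows "\<phi> s \<le> (max 1 (\<phi> r) / min 1 (\<phi> p)) powr ((hi - lo) / \<bar>r - p\<bar>)"
proof -
  define l where "l = (s - r) / (s - p)"
  define X where "X = max 1 (\<phi> r) / min 1 (\<phi> p)"
  have sp: "s - p \<noteq> 0" using between by auto
  have l: "0 < l" "l < 1"
    using between unfolding l_def by (auto simp: zero_less_divide_iff divide_less_eq_1)
  have l': "1 - l = (r - p) / (s - p)" using sp unfolding l_def by (simp add: field_simps)
  have "l * (s - p) = s - r" using sp unfolding l_def by simp
  then have r: "l * p + (1 - l) * s = r" by (simp add: algebra_simps)
  have "\<bar>s - p\<bar> \<le> hi - lo" "0 < \<bar>s - p\<bar>" using in_ivl sp by auto
  then have "\<bar>r - p\<bar> / (hi - lo) \<le> \<bar>r - p\<bar> / \<bar>s - p\<bar>" by (intro divide_left_mono) auto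
  also have "\<dots> = 1 - l" using l' l by (metis abs_divide abs_of_pos diff_gt_0_iff_gt)
  finally have kappa: "\<bar>r - p\<bar> / (hi - lo) \<le> 1 - l" .
  have "0 < (1 - l) * \<bar>r - p\<bar> / (hi - lo)" using l between in_ivl by auto
  then have exponent: "1 / (1 - l) \<le> (hi - lo) / \<bar>r - p\<bar>"
    using divide_left_mono[OF kappa, of 1] by simp
  have mu: "0 < min 1 (\<phi> p)" "min 1 (\<phi> p) \<le> 1" using pos by auto
  have X1: "1 \<le> X" unfolding X_def using mu by (simp add: field_simps)
  show ?thesis
  proof (cases "\<phi> s \<le> 1")
    case True
    have "1 \<le> X powr ((hi - lo) / \<bar>r - p\<bar>)"
      using X1 in_ivl between by (intro ge_one_powr_ge_zero) auto
    then show ?thesis using True unfolding X_def by simp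
  next
    case False
    have "min 1 (\<phi> p) \<le> \<phi> p powr l"
      using pos l powr_mono'[of l 1 "\<phi> p"] by (cases "1 \<le> \<phi> p") (auto intro: ge_one_powr_ge_zero)
    then have "min 1 (\<phi> p) * \<phi> s powr (1 - l) \<le> \<phi> p powr l * \<phi> s powr (1 - l)"
      by (intro mult_right_mono) auto
    also have "\<dots> \<le> max 1 (\<phi> r)" using log_concave_onD[OF lc in_ivl(1,3) l] r by auto
    finally have "\<phi> s powr (1 - l) \<le> X" unfolding X_def using mu by (simp add: field_simps)
    then have "(\<phi> s powr (1 - l)) powr (1 / (1 - l)) \<le> X powr (1 / (1 - l))"
      using l by (intro powr_mono2) auto
    also have "\<dots> \<le> X powr ((hi - lo) / \<bar>r - p\<bar>)" using X1 exponent by (intro powr_mono)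
    finally show ?thesis using l False unfolding X_def by (simp add: powr_powr)
  qed
qed

lemma log_concave_on_bounded_above:
  assumes lc: "log_concave_on {lo<..<hi} \<phi>"
  shows "\<exists>K. \<forall>s\<in>{lo<..<hi}. \<phi> s \<le> K"
proof (cases "\<exists>u\<in>{lo<..<hi}. 0 < \<phi> u \<and> (\<exists>v\<in>{lo<..<hi}. \<phi> u < \<phi> v)")
  case True
  then obtain u v where uv: "u \<in> {lo<..<hi}" "v \<in> {lo<..<hi}" "0 < \<phi> u" "\<phi> u < \<phi> v"
    by blast
  then have "u \<noteq> v" by auto
  define p q where "p = min u v" and "q = max u v"
  have pq: "p \<in> {lo<..<hi}" "q \<in> {lo<..<hi}" "p < q" "0 < \<phi> p" "0 < \<phi> q"
    using uv \<open>u \<noteq> v\<close> unfolding p_def q_def by (auto simp: min_def max_def)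
  define r where "r = (p + q) / 2"
  have r: "p < r" "r < q" "r \<in> {lo<..<hi}" using pq unfolding r_def by auto
  define Kp where "Kp = (max 1 (\<phi> r) / min 1 (\<phi> p)) powr ((hi - lo) / \<bar>r - p\<bar>)"
  define Kq where "Kq = (max 1 (\<phi> r) / min 1 (\<phi> q)) powr ((hi - lo) / \<bar>r - q\<bar>)"
  have "\<phi> s \<le> max (\<phi> r) (max Kp Kq)" if s: "s \<in> {lo<..<hi}" for s
  proof -
    consider "s = r" | "r < s" | "s < r" by linarith
    then show ?thesis
    proof cases
      case 2 then show ?thesis
        using log_concave_on_bound_beyond[OF lc pq(1) r(3) s pq(4)] r unfolding Kp_def by auto
    next
      case 3 then show ?thesis
        using log_concave_on_bound_beyond[OF lc pq(2) r(3) s pq(5)] r unfolding Kq_def by auto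
    qed simp
  qed
  then show ?thesis by blast
next
  case no_larger: False
  show ?thesis
  proof (cases "\<exists>u\<in>{lo<..<hi}. 0 < \<phi> u")
    case True
    then obtain u where u: "u \<in> {lo<..<hi}" "0 < \<phi> u" by blast
    then have "\<not> (\<exists>v\<in>{lo<..<hi}. \<phi> u < \<phi> v)" using no_larger by blast
    then have "\<forall>v\<in>{lo<..<hi}. \<phi> v \<le> \<phi> u" by (auto simp: not_less)
    then show ?thesis by blast
  next
    case False
    then show ?thesis by (intro exI[of _ 0]) (auto simp: not_less)
  qed
qed

section \<open>The Pr\'ekopa--Leindler inequality on the line\<close>

lemma measurable_emeasure_superlevel:
  fixes f :: "real \<Rightarrow> real"
  assumes [measurable]: "f \<in> borel_measurable lborel"
  shows "(\<lambda>\<tau>. emeasure lborel {x. c * \<tau> < f x}) \<in> borel_measurable lborel"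
proof -
  have "{p \<in> space (lborel \<Otimes>\<^sub>M lborel). c * fst p < f (snd p)} \<in> sets (lborel \<Otimes>\<^sub>M lborel)"
    by measurable
  then have "{p :: real \<times> real. c * fst p < f (snd p)} \<in> sets (lborel \<Otimes>\<^sub>M lborel)"
    by (simp add: space_pair_measure)
  from lborel.measurable_emeasure_Pair[OF this] show ?thesis
    by (simp add: vimage_def)
qed

lemma nn_integral_layer_cake:
  fixes f :: "real \<Rightarrow> real"
  assumes [measurable]: "f \<in> borel_measurable lborel" and nonneg: "\<And>x. 0 \<le> f x" and "0 < c"
  shows "(\<integral>\<^sup>+x. ennreal (f x) \<partial>lborel) =
     ennreal c * (\<integral>\<^sup>+\<tau>. indicator {0<..} \<tau> * emeasure lborel {x. c * \<tau> < f x} \<partial>lborel)"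
proof -
  define G where "G = {p :: real \<times> real. 0 < snd p \<and> c * snd p < f (fst p)}"
  have "{p \<in> space (lborel \<Otimes>\<^sub>M lborel). 0 < snd p \<and> c * snd p < f (fst p)} \<in> sets (lborel \<Otimes>\<^sub>M lborel)"
    by measurable
  then have G[measurable]: "G \<in> sets (lborel \<Otimes>\<^sub>M lborel)"
    unfolding G_def by (simp add: space_pair_measure)
  have vertical: "ennreal (f x) = ennreal c * (\<integral>\<^sup>+\<tau>. indicator G (x, \<tau>) \<partial>lborel)" for x
  proof -
    have "(\<lambda>\<tau>. indicator G (x, \<tau>) :: ennreal) = indicator {0<..<f x / c}"
      unfolding G_def using \<open>0 < c\<close> by (auto simp: indicator_def fun_eq_iff field_simps)
    then show ?thesis
      using \<open>0 < c\<close> nonneg[of x] by (simp add: emeasure_lborel_Ioo ennreal_mult[symmetric])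
  qed
  have horizontal: "(\<integral>\<^sup>+x. indicator G (x, \<tau>) \<partial>lborel) = indicator {0<..} \<tau> * emeasure lborel {x. c * \<tau> < f x}"
    for \<tau>
  proof -
    have "(\<lambda>x. indicator G (x, \<tau>) :: ennreal) = (\<lambda>x. indicator {0<..} \<tau> * indicator {x. c * \<tau> < f x} x)"
      unfolding G_def by (auto simp: indicator_def fun_eq_iff)
    then show ?thesis by (simp add: nn_integral_cmult)
  qed
  have "(\<integral>\<^sup>+x. ennreal (f x) \<partial>lborel) = ennreal c * (\<integral>\<^sup>+x. (\<integral>\<^sup>+\<tau>. indicator G (x, \<tau>) \<partial>lborel) \<partial>lborel)"
    unfolding vertical by (intro nn_integral_cmult) measurable
  also have "(\<integral>\<^sup>+x. (\<integral>\<^sup>+\<tau>. indicator G (x, \<tau>) \<partial>lborel) \<partial>lborel)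
      = (\<integral>\<^sup>+\<tau>. (\<integral>\<^sup>+x. indicator G (x, \<tau>) \<partial>lborel) \<partial>lborel)"
    by (intro lborel_pair.Fubini'[symmetric]) (simp add: case_prod_eta)
  finally show ?thesis unfolding horizontal .
qed

lemma nn_integral_ge_layer_cake_unit:
  fixes f :: "real \<Rightarrow> real"
  assumes "f \<in> borel_measurable lborel" "\<And>x. 0 \<le> f x" "0 < c"
  shows "ennreal c * (\<integral>\<^sup>+\<tau>. indicator {0<..<1} \<tau> * emeasure lborel {x. c * \<tau> < f x} \<partial>lborel)
    \<le> (\<integral>\<^sup>+x. ennreal (f x) \<partial>lborel)"
  unfolding nn_integral_layer_cake[OF assms]
  by (intro mult_left_mono nn_integral_mono mult_right_mono) (auto simp: indicator_def)

lemma nn_integral_layer_cake_unit: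
  fixes f :: "real \<Rightarrow> real"
  assumes "f \<in> borel_measurable lborel" "\<And>x. 0 \<le> f x" "0 < c" and bounded: "\<And>x. f x \<le> c"
  shows "(\<integral>\<^sup>+x. ennreal (f x) \<partial>lborel)
    = ennreal c * (\<integral>\<^sup>+\<tau>. indicator {0<..<1} \<tau> * emeasure lborel {x. c * \<tau> < f x} \<partial>lborel)"
proof -
  have empty: "{x. c * \<tau> < f x} = {}" if "1 \<le> \<tau>" for \<tau>
  proof -
    have "c \<le> c * \<tau>" using that \<open>0 < c\<close> by simp
    then show ?thesis using bounded by (auto simp: not_less intro: order_trans)
  qed
  then have "(\<integral>\<^sup>+\<tau>. indicator {0<..} \<tau> * emeasure lborel {x. c * \<tau> < f x} \<partial>lborel)
    = (\<integral>\<^sup>+\<tau>. indicator {0<..<1} \<tau> * emeasure lborel {x. c * \<tau> < f x} \<partial>lborel)"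
  proof (intro nn_integral_cong)
    fix \<tau> :: real
    show "indicator {0<..} \<tau> * emeasure lborel {x. c * \<tau> < f x}
      = indicator {0<..<1} \<tau> * emeasure lborel {x. c * \<tau> < f x}"
      using empty[of \<tau>] by (cases "1 \<le> \<tau>") (auto simp: indicator_def)
  qed
  then show ?thesis unfolding nn_integral_layer_cake[OF assms(1-3)] by simp
qed

lemma exists_midpoint_in_intervals:
  fixes I J :: "real set"
  assumes I: "is_interval I" "I \<noteq> {}" "bdd_below I" "bdd_above I"
    and J: "is_interval J" "J \<noteq> {}" "bdd_below J" "bdd_above J"
    and z: "(Inf I + Inf J) / 2 < z" "z < (Sup I + Sup J) / 2"
  shows "\<exists>p\<in>I. \<exists>q\<in>J. (p + q) / 2 = z"
proof -
  define e where "e = min (2 * z - (Inf I + Inf J)) (Sup I + Sup J - 2 * z)"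
  have e: "0 < e" using z unfolding e_def by auto
  obtain p0 where p0: "p0 \<in> I" "p0 < Inf I + e / 2"
    using cInf_less_iff[OF I(2,3), of "Inf I + e / 2"] e by auto
  obtain q0 where q0: "q0 \<in> J" "q0 < Inf J + e / 2"
    using cInf_less_iff[OF J(2,3), of "Inf J + e / 2"] e by auto
  obtain p1 where p1: "p1 \<in> I" "Sup I - e / 2 < p1"
    using less_cSup_iff[OF I(2,4), of "Sup I - e / 2"] e by auto
  obtain q1 where q1: "q1 \<in> J" "Sup J - e / 2 < q1"
    using less_cSup_iff[OF J(2,4), of "Sup J - e / 2"] e by auto
  have "e \<le> 2 * z - (Inf I + Inf J)" "e \<le> Sup I + Sup J - 2 * z" unfolding e_def by auto
  then have s: "p0 + q0 < 2 * z" "2 * z < p1 + q1" using p0 q0 p1 q1 by auto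
  define t where "t = (2 * z - (p0 + q0)) / ((p1 + q1) - (p0 + q0))"
  have t: "0 \<le> t" "t \<le> 1" using s unfolding t_def by (simp_all add: divide_le_eq_1)
  have ts: "t * ((p1 + q1) - (p0 + q0)) = 2 * z - (p0 + q0)" using s unfolding t_def by auto
  define p q where "p = (1 - t) * p0 + t * p1" and "q = (1 - t) * q0 + t * q1"
  have "p \<in> I" "q \<in> J"
    unfolding p_def q_def using t
      convexD[of I p0 p1 "1 - t" t] convexD[of J q0 q1 "1 - t" t] I(1) J(1) p0(1) p1(1) q0(1) q1(1)
    by (simp_all add: is_interval_convex_1)
  moreover have "(p + q) / 2 = z" using ts unfolding p_def q_def by (simp add: algebra_simps)
  ultimately show ?thesis by blast
qed

lemma emeasure_le_Sup_minus_Inf: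
  fixes I :: "real set"
  assumes "I \<noteq> {}" "bdd_below I" "bdd_above I"
  shows "emeasure lborel I \<le> ennreal (Sup I - Inf I)"
proof -
  have "I \<subseteq> {Inf I..Sup I}" using assms by (auto intro: cInf_lower cSup_upper)
  then have "emeasure lborel I \<le> emeasure lborel {Inf I..Sup I}" by (intro emeasure_mono) auto
  also have "\<dots> = ennreal (Sup I - Inf I)" using assms by (simp add: cInf_le_cSup)
  finally show ?thesis .
qed

lemma emeasure_intervals_le_midpoints:
  fixes I J K :: "real set"
  assumes I: "is_interval I" "I \<noteq> {}" "I \<subseteq> {lo..hi}"
    and J: "is_interval J" "J \<noteq> {}" "J \<subseteq> {lo..hi}"
    and midpoints: "\<And>p q. p \<in> I \<Longrightarrow> q \<in> J \<Longrightarrow> (p + q) / 2 \<in> K"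
    and "K \<in> sets lborel"
  shows "emeasure lborel I + emeasure lborel J \<le> 2 * emeasure lborel K"
proof -
  have bdd: "bdd_below I" "bdd_above I" "bdd_below J" "bdd_above J"
    using I(3) J(3) by (meson bdd_below_Icc bdd_above_Icc bdd_below_mono bdd_above_mono)+
  define a b where "a = (Inf I + Inf J) / 2" and "b = (Sup I + Sup J) / 2"
  have "Inf I \<le> Sup I" "Inf J \<le> Sup J"
    using I(2) J(2) bdd by (auto intro: cInf_le_cSup)
  then have ab: "0 \<le> Sup I - Inf I" "0 \<le> Sup J - Inf J" "a \<le> b" unfolding a_def b_def by auto
  have "{a<..<b} \<subseteq> K"
  proof
    fix z assume "z \<in> {a<..<b}"
    then have "\<exists>p\<in>I. \<exists>q\<in>J. (p + q) / 2 = z"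
      using exists_midpoint_in_intervals[OF I(1,2) bdd(1,2) J(1,2) bdd(3,4), of z]
      unfolding a_def b_def by simp
    then show "z \<in> K" using midpoints by blast
  qed
  have "emeasure lborel I + emeasure lborel J \<le> ennreal (Sup I - Inf I) + ennreal (Sup J - Inf J)"
    using I(2) J(2) bdd by (intro add_mono emeasure_le_Sup_minus_Inf)
  also have "\<dots> = ennreal (2 * (b - a))"
    using ab by (simp add: ennreal_plus[symmetric] a_def b_def algebra_simps)
  also have "\<dots> = 2 * ennreal (b - a)" by (subst ennreal_mult') auto
  also have "\<dots> = 2 * emeasure lborel {a<..<b}" using ab by simp
  also have "\<dots> \<le> 2 * emeasure lborel K"
    using \<open>{a<..<b} \<subseteq> K\<close> \<open>K \<in> sets lborel\<close> by (intro mult_left_mono emeasure_mono) auto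
  finally show ?thesis .
qed

lemma emeasure_superlevels_midpoint:
  fixes f g h :: "real \<Rightarrow> real"
  assumes "0 < s" "s < Sup (range f)" "bdd_above (range f)"
    and "0 < t" "t < Sup (range g)" "bdd_above (range g)"
    and support: "\<And>x. 0 < f x \<Longrightarrow> x \<in> {lo..hi}" "\<And>x. 0 < g x \<Longrightarrow> x \<in> {lo..hi}"
    and "is_interval {x. s < f x}" "is_interval {x. t < g x}"
    and [measurable]: "h \<in> borel_measurable lborel" and "\<And>x. 0 \<le> h x"
    and midpoint: "\<And>p q. f p * g q \<le> (h ((p + q) / 2))\<^sup>2"
  shows "emeasure lborel {x. s < f x} + emeasure lborel {x. t < g x}
    \<le> 2 * emeasure lborel {x. sqrt (s * t) < h x}"
proof (rule emeasure_intervals_le_midpoints)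
  show "{x. s < f x} \<noteq> {}" "{x. t < g x} \<noteq> {}"
    using less_cSup_iff[OF _ assms(3), of s] less_cSup_iff[OF _ assms(6), of t] assms(2,5) by auto
  show "{x. s < f x} \<subseteq> {lo..hi}" "{x. t < g x} \<subseteq> {lo..hi}"
    using support(1)[OF less_trans[OF assms(1)]] support(2)[OF less_trans[OF assms(4)]] by blast+
  fix p q assume "p \<in> {x. s < f x}" "q \<in> {x. t < g x}"
  then have "s * t < f p * g q" using assms(1,4) by (intro mult_strict_mono) auto
  also have "\<dots> \<le> (h ((p + q) / 2))\<^sup>2" by (rule midpoint)
  finally have "sqrt (s * t) < sqrt ((h ((p + q) / 2))\<^sup>2)" by (rule real_sqrt_less_mono)
  then show "(p + q) / 2 \<in> {x. sqrt (s * t) < h x}" using assms(12) by simp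
qed (use assms in auto)

lemma nn_integral_unit_superlevels_add_le:
  fixes f g h :: "real \<Rightarrow> real"
  assumes [measurable]: "f \<in> borel_measurable lborel" "g \<in> borel_measurable lborel"
      "h \<in> borel_measurable lborel"
    and levels: "\<And>\<tau>. 0 < \<tau> \<Longrightarrow> \<tau> < 1 \<Longrightarrow> emeasure lborel {x. a * \<tau> < f x}
      + emeasure lborel {x. b * \<tau> < g x} \<le> 2 * emeasure lborel {x. c * \<tau> < h x}"
  shows "(\<integral>\<^sup>+\<tau>. indicator {0<..<1} \<tau> * emeasure lborel {x. a * \<tau> < f x} \<partial>lborel)
    + (\<integral>\<^sup>+\<tau>. indicator {0<..<1} \<tau> * emeasure lborel {x. b * \<tau> < g x} \<partial>lborel)
    \<le> 2 * (\<integral>\<^sup>+\<tau>. indicator {0<..<1} \<tau> * emeasure lborel {x. c * \<tau> < h x} \<partial>lborel)"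
proof -
  have [measurable]: "(\<lambda>\<tau>. emeasure lborel {x. k * \<tau> < u x}) \<in> borel_measurable lborel"
    if "u \<in> borel_measurable lborel" for k and u :: "real \<Rightarrow> real"
    using measurable_emeasure_superlevel[OF that] .
  have "(\<integral>\<^sup>+\<tau>. indicator {0<..<1} \<tau> * emeasure lborel {x. a * \<tau> < f x} \<partial>lborel)
      + (\<integral>\<^sup>+\<tau>. indicator {0<..<1} \<tau> * emeasure lborel {x. b * \<tau> < g x} \<partial>lborel)
    = (\<integral>\<^sup>+\<tau>. indicator {0<..<1} \<tau> * emeasure lborel {x. a * \<tau> < f x}
      + indicator {0<..<1} \<tau> * emeasure lborel {x. b * \<tau> < g x} \<partial>lborel)"
    by (rule nn_integral_add[symmetric]) measurable
  also have "\<dots> \<le> (\<integral>\<^sup>+\<tau>. 2 * (indicator {0<..<1} \<tau> * emeasure lborel {x. c * \<tau> < h x}) \<partial>lborel)"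
    using levels by (intro nn_integral_mono) (auto simp: indicator_def)
  also have "\<dots> = 2 * (\<integral>\<^sup>+\<tau>. indicator {0<..<1} \<tau> * emeasure lborel {x. c * \<tau> < h x} \<partial>lborel)"
    by (rule nn_integral_cmult) measurable
  finally show ?thesis .
qed

lemma mult_le_square_if_weighted_mean_le:
  fixes a b F G H :: real
  assumes "0 < a" "0 < b" "0 \<le> F" "0 \<le> G" and mean: "F / a + G / b \<le> 2 * (H / sqrt (a * b))"
  shows "F * G \<le> H\<^sup>2"
proof -
  define x y c where "x = F / a" and "y = G / b" and "c = sqrt (a * b)"
  have xy: "0 \<le> x" "0 \<le> y" "0 < c" unfolding x_def y_def c_def using assms by auto
  have "F * G = c\<^sup>2 * (x * y)" unfolding x_def y_def c_def using assms by simp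
  also have "\<dots> \<le> c\<^sup>2 * ((x + y) / 2)\<^sup>2"
    using sum_squares_ge_zero[of "x - y" 0] by (intro mult_left_mono) (auto simp: power2_eq_square field_simps)
  also have "\<dots> \<le> c\<^sup>2 * (H / c)\<^sup>2"
    using mean xy unfolding x_def y_def c_def by (intro mult_left_mono power_mono) (auto simp: mult.commute)
  also have "\<dots> = H\<^sup>2" using xy by (simp add: power_divide)
  finally show ?thesis .
qed

lemma ennreal_eq_divide_of_mult_eq:
  assumes "ennreal a * X = ennreal F" "0 < a" "0 \<le> F"
  shows "X = ennreal (F / a)"
proof -
  have "X = (X * ennreal a) / ennreal a" using \<open>0 < a\<close> by (simp add: mult_divide_eq_ennreal)
  also have "\<dots> = ennreal (F / a)" using assms by (simp add: mult.commute divide_ennreal)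
  finally show ?thesis .
qed

lemma ennreal_le_divide_of_mult_le:
  assumes "ennreal c * Z \<le> ennreal H" "0 < c" "0 \<le> H"
  shows "Z \<le> ennreal (H / c)"
proof (cases Z)
  case (real z)
  then have "c * z \<le> H" using assms by (simp add: ennreal_mult[symmetric] ennreal_le_iff)
  then have "z \<le> H / c" using \<open>0 < c\<close> by (simp add: field_simps)
  then show ?thesis using real by (simp add: ennreal_leI)
qed (use assms in \<open>simp add: ennreal_mult_top top_unique\<close>)

lemma mult_le_square_of_layer_cakes:
  fixes X Y Z :: ennreal and a b F G H :: real
  assumes "0 < a" "0 < b" "0 \<le> F" "0 \<le> G" "0 \<le> H"
    and "ennreal a * X = ennreal F" "ennreal b * Y = ennreal G"
    and "ennreal (sqrt (a * b)) * Z \<le> ennreal H" and "X + Y \<le> 2 * Z"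
  shows "F * G \<le> H\<^sup>2"
proof (rule mult_le_square_if_weighted_mean_le)
  have c: "0 < sqrt (a * b)" using assms by simp
  have "X + Y = ennreal (F / a + G / b)"
    using assms ennreal_eq_divide_of_mult_eq by (simp add: ennreal_plus)
  moreover have "2 * Z \<le> ennreal (2 * (H / sqrt (a * b)))"
    using ennreal_le_divide_of_mult_le[OF assms(8) c assms(5)]
    by (subst ennreal_mult') (auto intro: mult_left_mono)
  ultimately have "ennreal (F / a + G / b) \<le> ennreal (2 * (H / sqrt (a * b)))"
    using \<open>X + Y \<le> 2 * Z\<close> by simp
  then show "F / a + G / b \<le> 2 * (H / sqrt (a * b))"
    using assms by (subst (asm) ennreal_le_iff) auto
qed (use assms in auto)

lemma prekopa_leindler_quasiconcave:
  fixes f g h :: "real \<Rightarrow> real"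
  assumes [measurable]: "f \<in> borel_measurable lborel" "g \<in> borel_measurable lborel"
      "h \<in> borel_measurable lborel"
    and nonneg: "\<And>x. 0 \<le> f x" "\<And>x. 0 \<le> g x" "\<And>x. 0 \<le> h x"
    and integrable: "integrable lborel f" "integrable lborel g" "integrable lborel h"
    and bdd: "bdd_above (range f)" "bdd_above (range g)"
    and support: "\<And>x. 0 < f x \<Longrightarrow> x \<in> {lo..hi}" "\<And>x. 0 < g x \<Longrightarrow> x \<in> {lo..hi}"
    and quasiconcave: "\<And>t. 0 < t \<Longrightarrow> is_interval {x. t < f x}" "\<And>t. 0 < t \<Longrightarrow> is_interval {x. t < g x}"
    and midpoint: "\<And>p q. f p * g q \<le> (h ((p + q) / 2))\<^sup>2"
  shows "integral\<^sup>L lborel f * integral\<^sup>L lborel g \<le> (integral\<^sup>L lborel h)\<^sup>2"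
proof -
  define a b where "a = Sup (range f)" and "b = Sup (range g)"
  have le_sup: "f x \<le> a" "g x \<le> b" for x unfolding a_def b_def using bdd by (auto intro: cSup_upper)
  show ?thesis
  proof (cases "0 < a \<and> 0 < b")
    case False
    have "f = (\<lambda>_. 0)" if "a \<le> 0"
      using le_sup(1) nonneg(1) that by (intro ext antisym) (auto intro: order_trans)
    moreover have "g = (\<lambda>_. 0)" if "b \<le> 0"
      using le_sup(2) nonneg(2) that by (intro ext antisym) (auto intro: order_trans)
    ultimately show ?thesis using False by (cases "a \<le> 0") auto
  next
    case True
    have "sqrt ((a * \<tau>) * (b * \<tau>)) = sqrt (a * b) * \<tau>" if "0 < \<tau>" for \<tau>
      using that by (simp add: real_sqrt_mult power2_eq_square[symmetric])
    then have "emeasure lborel {x. a * \<tau> < f x} + emeasure lborel {x. b * \<tau> < g x}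
      \<le> 2 * emeasure lborel {x. sqrt (a * b) * \<tau> < h x}" if "0 < \<tau>" "\<tau> < 1" for \<tau>
      using emeasure_superlevels_midpoint[of "a * \<tau>" f "b * \<tau>" g lo hi h] that True
        bdd support quasiconcave nonneg(3) midpoint unfolding a_def b_def by simp
    then show ?thesis
      using True nonneg nn_integral_unit_superlevels_add_le[of f g h a b "sqrt (a * b)"]
        nn_integral_layer_cake_unit[of f a] nn_integral_layer_cake_unit[of g b]
        nn_integral_ge_layer_cake_unit[of h "sqrt (a * b)"] le_sup
        nn_integral_eq_integral[OF integrable(1)] nn_integral_eq_integral[OF integrable(2)]
        nn_integral_eq_integral[OF integrable(3)]
      by (intro mult_le_square_of_layer_cakes[of a b]) auto
  qed
qed

section \<open>Differentiation under the integral sign\<close>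

lemma has_real_derivative_of_quadratic_remainder:
  fixes F :: "real \<Rightarrow> real"
  assumes x: "x \<in> {a<..<b}"
    and remainder: "\<And>y. y \<in> {a<..<b} \<Longrightarrow> \<bar>F y - F x - (y - x) * D\<bar> \<le> C * (y - x)\<^sup>2"
  shows "(F has_real_derivative D) (at x)"
  unfolding has_field_derivative_iff
proof (rule LIM_zero_cancel, rule Lim_null_comparison)
  have "\<forall>\<^sub>F y in at x. y \<in> {a<..<b}" using x by (intro eventually_at_in_open') auto
  moreover have "\<forall>\<^sub>F y in at x. y \<noteq> x" by (simp add: eventually_at_filter)
  ultimately show "\<forall>\<^sub>F y in at x. norm ((F y - F x) / (y - x) - D) \<le> C * \<bar>y - x\<bar>"
  proof eventually_elim
    case (elim y)
    then have "(F y - F x) / (y - x) - D = (F y - F x - (y - x) * D) / (y - x)"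
      by (simp add: field_simps)
    then have "norm ((F y - F x) / (y - x) - D) = \<bar>F y - F x - (y - x) * D\<bar> / \<bar>y - x\<bar>"
      by simp
    also have "\<dots> \<le> C * (y - x)\<^sup>2 / \<bar>y - x\<bar>"
      using remainder elim by (intro divide_right_mono) auto
    also have "\<dots> = C * \<bar>y - x\<bar>"
      using elim by (cases "y < x") (simp_all add: power2_eq_square field_simps)
    finally show ?case .
  qed
  show "((\<lambda>y. C * \<bar>y - x\<bar>) \<longlongrightarrow> 0) (at x)"
    by (rule tendsto_eq_intros | simp)+
qed

lemma abs_taylor_remainder_le:
  fixes h h1 h2 :: "real \<Rightarrow> real"
  assumes xy: "x \<in> {a<..<b}" "y \<in> {a<..<b}"
    and h1: "\<And>z. z \<in> {a<..<b} \<Longrightarrow> (h has_real_derivative h1 z) (at z)"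
    and h2: "\<And>z. z \<in> {a<..<b} \<Longrightarrow> (h1 has_real_derivative h2 z) (at z)"
    and bound: "\<And>z. z \<in> {a<..<b} \<Longrightarrow> \<bar>h2 z\<bar> \<le> K"
  shows "\<bar>h y - h x - (y - x) * h1 x\<bar> \<le> K * (y - x)\<^sup>2"
proof -
  define S where "S = closed_segment x y"
  have S: "convex S" "S \<subseteq> {a<..<b}" "x \<in> S" "y \<in> S"
    unfolding S_def using xy by (auto simp: closed_segment_subset)
  have K: "0 \<le> K" using bound[OF xy(1)] by linarith
  have h1_lipschitz: "\<bar>h1 z - h1 x\<bar> \<le> K * \<bar>y - x\<bar>" if z: "z \<in> S" for z
  proof -
    have "norm (h1 z - h1 x) \<le> K * norm (z - x)"
    proof (rule field_differentiable_bound[where f'=h2, OF S(1) _ _ z S(3)])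
      fix w assume "w \<in> S"
      then have "w \<in> {a<..<b}" using S(2) by blast
      then show "(h1 has_field_derivative h2 w) (at w within S)" "norm (h2 w) \<le> K"
        using h2 bound by (auto intro: has_field_derivative_at_within)
    qed
    moreover have "\<bar>z - x\<bar> \<le> \<bar>y - x\<bar>" using segment_bound1[of z x y] z unfolding S_def by simp
    ultimately show ?thesis using K by (simp add: order_trans[OF _ mult_left_mono])
  qed
  have "norm ((h y - y * h1 x) - (h x - x * h1 x)) \<le> (K * \<bar>y - x\<bar>) * norm (y - x)"
  proof (rule field_differentiable_bound[OF S(1) _ _ S(4,3)])
    fix w assume "w \<in> S"
    then have "w \<in> {a<..<b}" using S(2) by blast
    then have "((\<lambda>z. h z - z * h1 x) has_field_derivative (h1 w - 1 * h1 x)) (at w)"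
      by (intro DERIV_diff h1 DERIV_cmult_right DERIV_ident)
    then show "((\<lambda>z. h z - z * h1 x) has_field_derivative (h1 w - h1 x)) (at w within S)"
      by (simp add: has_field_derivative_at_within)
  qed (use h1_lipschitz in simp)
  moreover have "(h y - y * h1 x) - (h x - x * h1 x) = h y - h x - (y - x) * h1 x"
    by (simp add: algebra_simps)
  ultimately show ?thesis by (simp add: power2_eq_square abs_mult_self)
qed

lemma has_real_derivative_integral_lborel:
  fixes H H' H'' :: "'s \<Rightarrow> real \<Rightarrow> real" and B :: "'s \<Rightarrow> real"
  assumes x: "x \<in> {a<..<b}"
    and integrable: "\<And>y. y \<in> {a<..<b} \<Longrightarrow> integrable M (\<lambda>s. H s y)"
      "integrable M (\<lambda>s. H' s x)" "integrable M B"
    and H': "\<And>s y. y \<in> {a<..<b} \<Longrightarrow> ((\<lambda>y. H s y) has_real_derivative H' s y) (at y)"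
    and H'': "\<And>s y. y \<in> {a<..<b} \<Longrightarrow> ((\<lambda>y. H' s y) has_real_derivative H'' s y) (at y)"
    and bound: "\<And>s y. y \<in> {a<..<b} \<Longrightarrow> \<bar>H'' s y\<bar> \<le> B s"
  shows "((\<lambda>y. \<integral>s. H s y \<partial>M) has_real_derivative (\<integral>s. H' s x \<partial>M)) (at x)"
proof (rule has_real_derivative_of_quadratic_remainder[OF x])
  fix y assume y: "y \<in> {a<..<b}"
  have "\<bar>(\<integral>s. H s y \<partial>M) - (\<integral>s. H s x \<partial>M) - (y - x) * (\<integral>s. H' s x \<partial>M)\<bar>
      = \<bar>\<integral>s. H s y - H s x - (y - x) * H' s x \<partial>M\<bar>"
    using integrable(1)[OF y] integrable(1)[OF x] integrable(2) by simp
  also have "\<dots> \<le> (\<integral>s. \<bar>H s y - H s x - (y - x) * H' s x\<bar> \<partial>M)"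
    by (rule integral_abs_bound)
  also have "\<dots> \<le> (\<integral>s. B s * (y - x)\<^sup>2 \<partial>M)"
    using integrable(1)[OF y] integrable(1)[OF x] integrable(2,3)
      abs_taylor_remainder_le[OF x y H' H'' bound]
    by (intro integral_mono) auto
  also have "\<dots> = (\<integral>s. B s \<partial>M) * (y - x)\<^sup>2" by simp
  finally show "\<bar>(\<integral>s. H s y \<partial>M) - (\<integral>s. H s x \<partial>M) - (y - x) * (\<integral>s. H' s x \<partial>M)\<bar>
    \<le> (\<integral>s. B s \<partial>M) * (y - x)\<^sup>2" .
qed

lemma deriv_eq_if_eq_on_open:
  assumes "open S" "x \<in> S" "\<And>y. y \<in> S \<Longrightarrow> f y = g y" "(g has_real_derivative D) (at x)"
  shows "deriv f x = D"
  by (rule DERIV_imp_deriv, rule has_field_derivative_transform_within_open[OF assms(4,1,2)])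
    (simp add: assms(3))

definition bernstein_weight :: "real \<Rightarrow> real \<Rightarrow> real \<Rightarrow> real" where
  "bernstein_weight M s y = exp (s * ln (1 - y) + (M - s) * ln y)"

text \<open>The \<open>k\<close>-th derivative of \<open>bernstein_weight M s\<close> is the weight times \<open>bernstein_ratio\<close>\<open>k\<close>.\<close>

definition bernstein_ratio1 :: "real \<Rightarrow> real \<Rightarrow> real \<Rightarrow> real" where
  "bernstein_ratio1 M s y = (M - s) / y - s / (1 - y)"

definition bernstein_ratio2 :: "real \<Rightarrow> real \<Rightarrow> real \<Rightarrow> real" where
  "bernstein_ratio2 M s y = (bernstein_ratio1 M s y)\<^sup>2 - (M - s) / y\<^sup>2 - s / (1 - y)\<^sup>2"

definition bernstein_ratio3 :: "real \<Rightarrow> real \<Rightarrow> real \<Rightarrow> real" where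
  "bernstein_ratio3 M s y = bernstein_ratio1 M s y * bernstein_ratio2 M s y
     - 2 * bernstein_ratio1 M s y * ((M - s) / y\<^sup>2 + s / (1 - y)\<^sup>2)
     + 2 * (M - s) / y ^ 3 - 2 * s / (1 - y) ^ 3"

lemma bernstein_weight_pos: "0 < bernstein_weight M s y"
  unfolding bernstein_weight_def by simp

lemma bernstein_weight_eq_powr:
  "0 < y \<Longrightarrow> y < 1 \<Longrightarrow> bernstein_weight M s y = (1 - y) powr s * y powr (M - s)"
  unfolding bernstein_weight_def powr_def by (simp add: exp_add)

lemma bernstein_weight_midpoint:
  "bernstein_weight M p y * bernstein_weight M q y = (bernstein_weight M ((p + q) / 2) y)\<^sup>2"
  unfolding bernstein_weight_def
  by (simp add: power2_eq_square exp_add[symmetric] algebra_simps add_divide_distrib)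

lemma has_real_derivative_bernstein_weight:
  assumes "0 < y" "y < 1"
  shows "((\<lambda>y. bernstein_weight M s y) has_real_derivative
    bernstein_weight M s y * bernstein_ratio1 M s y) (at y)"
  unfolding bernstein_weight_def bernstein_ratio1_def
  using assms by (auto intro!: derivative_eq_intros simp: field_simps)

lemma has_real_derivative_bernstein_ratio1:
  assumes "0 < y" "y < 1"
  shows "((\<lambda>y. bernstein_ratio1 M s y) has_real_derivative
    bernstein_ratio2 M s y - bernstein_ratio1 M s y * bernstein_ratio1 M s y) (at y)"
  unfolding bernstein_ratio2_def power2_eq_square bernstein_ratio1_def
  using assms by (auto intro!: derivative_eq_intros simp: field_simps)

lemma has_real_derivative_bernstein_ratio2:
  assumes y: "0 < y" "y < 1"
  shows "((\<lambda>y. bernstein_ratio2 M s y) has_real_derivative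
    bernstein_ratio3 M s y - bernstein_ratio1 M s y * bernstein_ratio2 M s y) (at y)"
proof -
  have A: "((\<lambda>y. (M - s) / y\<^sup>2) has_real_derivative - 2 * (M - s) / y ^ 3) (at y)"
    using y by (auto intro!: derivative_eq_intros simp: field_simps power2_eq_square power3_eq_cube)
  have B: "((\<lambda>y. s / (1 - y)\<^sup>2) has_real_derivative 2 * s / (1 - y) ^ 3) (at y)"
    using y by (auto intro!: derivative_eq_intros simp: divide_simps eval_nat_numeral)
      (simp add: algebra_simps)
  have "bernstein_ratio2 M s y - bernstein_ratio1 M s y * bernstein_ratio1 M s y
      = - ((M - s) / y\<^sup>2) - s / (1 - y)\<^sup>2"
    by (simp add: bernstein_ratio2_def power2_eq_square)
  then have r1: "((\<lambda>y. bernstein_ratio1 M s y) has_real_derivative - ((M - s) / y\<^sup>2) - s / (1 - y)\<^sup>2) (at y)"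
    using has_real_derivative_bernstein_ratio1[OF y, of M s] by simp
  show ?thesis
    unfolding bernstein_ratio2_def
    by (rule DERIV_cong[OF DERIV_diff[OF DERIV_diff[OF DERIV_power[OF r1] A] B]])
      (use y in \<open>simp add: bernstein_ratio2_def bernstein_ratio3_def field_simps\<close>)
qed

lemma has_real_derivative_bernstein_weight_mult:
  assumes y: "0 < y" "y < 1"
    and r: "(r has_real_derivative q - bernstein_ratio1 M s y * r y) (at y)"
  shows "((\<lambda>y. bernstein_weight M s y * r y) has_real_derivative bernstein_weight M s y * q) (at y)"
  by (rule DERIV_cong[OF DERIV_mult[OF has_real_derivative_bernstein_weight[OF y] r]])
    (simp add: algebra_simps)

lemma rbinom_eq_rGamma: "rbinom M s = Gamma (M + 1) * rGamma (s + 1) * rGamma (M - s + 1)"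
  unfolding rbinom_def Gamma_def by (simp add: field_simps)

lemma continuous_on_rbinom: "continuous_on A (rbinom M)"
proof -
  have "continuous_on A (\<lambda>s. rGamma (s + u))" for u :: real
    by (rule continuous_on_compose2[OF continuous_on_rGamma[of UNIV]]) (auto intro!: continuous_intros)
  moreover have "continuous_on A (\<lambda>s. rGamma (M - s + 1))"
    by (rule continuous_on_compose2[OF continuous_on_rGamma[of UNIV]]) (auto intro!: continuous_intros)
  ultimately show ?thesis
    unfolding rbinom_eq_rGamma by (intro continuous_intros)
qed

lemma rbinom_pos: "0 < s \<Longrightarrow> s < M \<Longrightarrow> 0 < rbinom M s"
  unfolding rbinom_def by (simp add: Gamma_real_pos)

lemma bounded_on_compact_of_continuous:
  fixes g :: "'a::topological_space \<Rightarrow> real"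
  assumes "compact S" "continuous_on S g"
  obtains K where "\<And>s. s \<in> S \<Longrightarrow> \<bar>g s\<bar> \<le> K"
proof -
  obtain K where "\<forall>z\<in>g ` S. norm z \<le> K"
    using compact_imp_bounded[OF compact_continuous_image[OF assms(2,1)]] bounded_iff by blast
  then show ?thesis by (intro that[of K]) auto
qed

text \<open>Truncated to \<open>{0<..<M}\<close>, so that the integral in the theorem becomes one over \<open>lborel\<close>.\<close>

definition weighted_binom :: "real \<Rightarrow> (real \<Rightarrow> real) \<Rightarrow> real \<Rightarrow> real" where
  "weighted_binom M \<alpha> s = indicator {0<..<M} s * (\<alpha> s * rbinom M s)"

definition bernstein_moment :: "real \<Rightarrow> (real \<Rightarrow> real) \<Rightarrow> real \<Rightarrow> (real \<Rightarrow> real) \<Rightarrow> real" where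
  "bernstein_moment M \<alpha> x g = (\<integral>s. weighted_binom M \<alpha> s * (bernstein_weight M s x * g s) \<partial>lborel)"

lemma set_integral_eq_bernstein_moment:
  assumes "0 < y" "y < 1"
  shows "(LINT s:{0<..<M}|lborel. \<alpha> s * rbinom M s * (1 - y) powr s * y powr (M - s))
    = bernstein_moment M \<alpha> y (\<lambda>_. 1)"
  unfolding set_lebesgue_integral_def bernstein_moment_def weighted_binom_def
  using assms by (simp add: bernstein_weight_eq_powr mult.assoc)

lemma weighted_binom_eq_0: "s \<notin> {0<..<M} \<Longrightarrow> weighted_binom M \<alpha> s = 0"
  unfolding weighted_binom_def by simp

context
  fixes M :: real and \<alpha> :: "real \<Rightarrow> real"
  assumes M: "1 < M" and lc: "log_concave_on {0<..<M} \<alpha>"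
begin

lemma weighted_binom_nonneg: "0 \<le> weighted_binom M \<alpha> s"
  unfolding weighted_binom_def
  using log_concave_on_nonneg[OF lc] rbinom_pos[of s M] by (auto simp: indicator_def less_imp_le)

lemma borel_measurable_weighted_binom: "weighted_binom M \<alpha> \<in> borel_measurable borel"
proof -
  have "(\<lambda>s. indicator {0<..<M} s * \<alpha> s) \<in> borel_measurable borel"
    by (rule borel_measurable_log_concave[OF lc]) simp
  moreover have "rbinom M \<in> borel_measurable borel"
    by (rule borel_measurable_continuous_onI[OF continuous_on_rbinom])
  ultimately have "(\<lambda>s. indicator {0<..<M} s * \<alpha> s * rbinom M s) \<in> borel_measurable borel"
    by measurable
  then show ?thesis unfolding weighted_binom_def by (simp add: mult.assoc)
qed

lemma weighted_binom_bounded: obtains K where "\<And>s. weighted_binom M \<alpha> s \<le> K"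
proof -
  obtain Ka where Ka: "\<And>s. s \<in> {0<..<M} \<Longrightarrow> \<alpha> s \<le> Ka"
    using log_concave_on_bounded_above[OF lc] by blast
  obtain Kr where Kr: "\<And>s. s \<in> {0..M} \<Longrightarrow> \<bar>rbinom M s\<bar> \<le> Kr"
    using bounded_on_compact_of_continuous[OF compact_Icc continuous_on_rbinom] by blast
  have "weighted_binom M \<alpha> s \<le> \<bar>Ka\<bar> * Kr" for s
  proof (cases "s \<in> {0<..<M}")
    case True
    then have "\<alpha> s * rbinom M s \<le> \<bar>Ka\<bar> * Kr"
      using Ka[OF True] Kr[of s] log_concave_on_nonneg[OF lc True] rbinom_pos[of s M]
      by (intro mult_mono) auto
    then show ?thesis using True unfolding weighted_binom_def by simp
  next
    case False
    then show ?thesis using Kr[of 0] M by (simp add: weighted_binom_eq_0)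
  qed
  then show ?thesis using that by blast
qed

lemma weighted_binom_mult_bounded:
  assumes "continuous_on {0..M} g"
  obtains K where "\<And>s. \<bar>weighted_binom M \<alpha> s * g s\<bar> \<le> K"
proof -
  obtain Kc where Kc: "\<And>s. weighted_binom M \<alpha> s \<le> Kc" using weighted_binom_bounded by blast
  obtain Kg where Kg: "\<And>s. s \<in> {0..M} \<Longrightarrow> \<bar>g s\<bar> \<le> Kg"
    using bounded_on_compact_of_continuous[OF compact_Icc assms] by blast
  have "\<bar>weighted_binom M \<alpha> s * g s\<bar> \<le> Kc * Kg" for s
  proof (cases "s \<in> {0<..<M}")
    case True
    then have "\<bar>g s\<bar> \<le> Kg" using Kg by auto
    then show ?thesis using Kc[of s] weighted_binom_nonneg[of s] by (auto simp: abs_mult intro: mult_mono)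
  next
    case False
    then show ?thesis using Kc[of s] Kg[of 0] M weighted_binom_nonneg[of s]
      by (simp add: weighted_binom_eq_0)
  qed
  then show ?thesis using that by blast
qed

lemma integrable_weighted_binom_mult:
  assumes "continuous_on {0..M} g"
  shows "integrable lborel (\<lambda>s. weighted_binom M \<alpha> s * g s)"
proof -
  obtain K where K: "\<And>s. \<bar>weighted_binom M \<alpha> s * g s\<bar> \<le> K"
    using weighted_binom_mult_bounded[OF assms] by blast
  show ?thesis
  proof (rule integrableI_bounded_set[where A="{0<..<M}" and B=K])
    have "(\<lambda>s. weighted_binom M \<alpha> s * (indicator {0..M} s *\<^sub>R g s)) \<in> borel_measurable borel"
      using borel_measurable_weighted_binom borel_measurable_continuous_on_indicator[OF _ assms]
      by measurable
    moreover have "(\<lambda>s. weighted_binom M \<alpha> s * (indicator {0..M} s *\<^sub>R g s))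
        = (\<lambda>s. weighted_binom M \<alpha> s * g s)"
      by (auto simp: weighted_binom_def indicator_def fun_eq_iff)
    ultimately show "(\<lambda>s. weighted_binom M \<alpha> s * g s) \<in> borel_measurable lborel" by simp
  qed (use M K in \<open>auto simp: weighted_binom_eq_0\<close>)
qed

lemma has_real_derivative_integral_weighted_binom:
  fixes G G' G'' :: "real \<Rightarrow> real \<Rightarrow> real"
  assumes x: "0 < x" "x < 1"
    and G': "\<And>s y. 0 < y \<Longrightarrow> y < 1 \<Longrightarrow> ((\<lambda>y. G s y) has_real_derivative G' s y) (at y)"
    and G'': "\<And>s y. 0 < y \<Longrightarrow> y < 1 \<Longrightarrow> ((\<lambda>y. G' s y) has_real_derivative G'' s y) (at y)"
    and continuous: "\<And>y. 0 < y \<Longrightarrow> y < 1 \<Longrightarrow> continuous_on {0..M} (\<lambda>s. G s y)"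
      "continuous_on {0..M} (\<lambda>s. G' s x)"
      "\<And>c d. 0 < c \<Longrightarrow> d < 1 \<Longrightarrow> continuous_on ({0..M} \<times> {c..d}) (\<lambda>p. G'' (fst p) (snd p))"
  shows "((\<lambda>y. \<integral>s. weighted_binom M \<alpha> s * G s y \<partial>lborel)
    has_real_derivative (\<integral>s. weighted_binom M \<alpha> s * G' s x \<partial>lborel)) (at x)"
proof -
  define c d where "c = x / 2" and "d = (1 + x) / 2"
  have cd: "0 < c" "d < 1" "x \<in> {c<..<d}" using x unfolding c_def d_def by auto
  obtain K where K: "\<And>p. p \<in> {0..M} \<times> {c..d} \<Longrightarrow> \<bar>G'' (fst p) (snd p)\<bar> \<le> K"
    using bounded_on_compact_of_continuous[OF compact_Times[OF compact_Icc compact_Icc] continuous(3)[OF cd(1,2)]]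
    by blast
  have bound: "\<bar>weighted_binom M \<alpha> s * G'' s y\<bar> \<le> weighted_binom M \<alpha> s * K" if "y \<in> {c<..<d}" for s y
  proof (cases "s \<in> {0<..<M}")
    case True
    then have "\<bar>G'' s y\<bar> \<le> K" using K[of "(s, y)"] that by auto
    then show ?thesis using weighted_binom_nonneg[of s] by (simp add: abs_mult mult_left_mono)
  qed (simp add: weighted_binom_eq_0)
  show ?thesis
  proof (rule has_real_derivative_integral_lborel[where H''="\<lambda>s y. weighted_binom M \<alpha> s * G'' s y"
        and B="\<lambda>s. weighted_binom M \<alpha> s * K", OF cd(3)])
    show "integrable lborel (\<lambda>s. weighted_binom M \<alpha> s * G s y)" if "y \<in> {c<..<d}" for y
      using that cd by (intro integrable_weighted_binom_mult continuous) auto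
    show "integrable lborel (\<lambda>s. weighted_binom M \<alpha> s * K)"
      by (rule integrable_weighted_binom_mult[OF continuous_on_const])
  qed (use cd bound in \<open>auto intro!: integrable_weighted_binom_mult continuous DERIV_cmult G' G''\<close>)
qed

lemma has_real_derivative_bernstein_moment:
  assumes x: "0 < x" "x < 1"
  shows "((\<lambda>y. bernstein_moment M \<alpha> y (\<lambda>_. 1)) has_real_derivative
      bernstein_moment M \<alpha> x (\<lambda>s. bernstein_ratio1 M s x)) (at x)"
    and "((\<lambda>y. bernstein_moment M \<alpha> y (\<lambda>s. bernstein_ratio1 M s y)) has_real_derivative
      bernstein_moment M \<alpha> x (\<lambda>s. bernstein_ratio2 M s x)) (at x)"
proof -
  have continuous: "continuous_on ({0..M} \<times> {c..d}) (\<lambda>p. bernstein_weight M (fst p) (snd p) * r (fst p) (snd p))"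
    if "0 < c" "d < 1" "r \<in> {\<lambda>s y. 1, bernstein_ratio1 M, bernstein_ratio2 M, bernstein_ratio3 M}" for c d r
  proof -
    have "\<forall>p\<in>{0..M} \<times> {c..d}. 0 < snd p \<and> 0 < 1 - snd p" using that by auto
    then show ?thesis using that(3)
      unfolding bernstein_weight_def bernstein_ratio3_def bernstein_ratio2_def bernstein_ratio1_def
      by (elim insertE emptyE; simp only:; intro continuous_intros) auto
  qed
  have continuous_s: "continuous_on {0..M} (\<lambda>s. bernstein_weight M s y * r s y)"
    if "0 < y" "y < 1" "r \<in> {\<lambda>s y. 1, bernstein_ratio1 M, bernstein_ratio2 M}" for y r
    using that(3) unfolding bernstein_weight_def bernstein_ratio2_def bernstein_ratio1_def
    by (elim insertE emptyE; simp only:; intro continuous_intros) (use that in auto)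
  note derivs = has_real_derivative_bernstein_weight
    has_real_derivative_bernstein_weight_mult[OF _ _ has_real_derivative_bernstein_ratio1]
    has_real_derivative_bernstein_weight_mult[OF _ _ has_real_derivative_bernstein_ratio2]
  note continuous_instances =
    continuous[where r="\<lambda>s y. 1", simplified] continuous_s[where r="\<lambda>s y. 1", simplified]
    continuous[where r="bernstein_ratio1 M", simplified] continuous_s[where r="bernstein_ratio1 M", simplified]
    continuous[where r="bernstein_ratio2 M", simplified] continuous_s[where r="bernstein_ratio2 M", simplified]
    continuous[where r="bernstein_ratio3 M", simplified]
  show "((\<lambda>y. bernstein_moment M \<alpha> y (\<lambda>_. 1)) has_real_derivative
      bernstein_moment M \<alpha> x (\<lambda>s. bernstein_ratio1 M s x)) (at x)"
    unfolding bernstein_moment_def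
    by (rule has_real_derivative_integral_weighted_binom[OF x])
      (use continuous_instances x derivs in auto)
  show "((\<lambda>y. bernstein_moment M \<alpha> y (\<lambda>s. bernstein_ratio1 M s y)) has_real_derivative
      bernstein_moment M \<alpha> x (\<lambda>s. bernstein_ratio2 M s x)) (at x)"
    unfolding bernstein_moment_def
    by (rule has_real_derivative_integral_weighted_binom[OF x])
      (use continuous_instances x derivs in auto)
qed

end

section \<open>The moment inequality\<close>

text \<open>For \<open>a = -1, 0, 1\<close> these are the integrands of the moments of \<open>s * (s - 1)\<close>, \<open>s * (M - s)\<close>
  and \<open>(M - s) * (M - s - 1)\<close>, see \<open>weighted_binom_mult_eq_binom_shift\<close>.\<close>

definition binom_shift :: "real \<Rightarrow> (real \<Rightarrow> real) \<Rightarrow> real \<Rightarrow> real \<Rightarrow> real \<Rightarrow> real" where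
  "binom_shift M \<alpha> x a s =
     \<alpha> s * Gamma (M + 1) * rGamma (s + a) * rGamma (M - s - a) * bernstein_weight M s x"

lemma weighted_binom_mult_eq_binom_shift:
  assumes "s \<in> {0<..<M}"
  shows "weighted_binom M \<alpha> s * (bernstein_weight M s x * (s * (s - 1))) = binom_shift M \<alpha> x (-1) s"
    and "weighted_binom M \<alpha> s * (bernstein_weight M s x * (s * (M - s))) = binom_shift M \<alpha> x 0 s"
    and "weighted_binom M \<alpha> s * (bernstein_weight M s x * ((M - s) * (M - s - 1))) = binom_shift M \<alpha> x 1 s"
proof -
  have rG: "rGamma s = s * rGamma (s + 1)" "rGamma (s - 1) = (s - 1) * rGamma s"
    "rGamma (M - s) = (M - s) * rGamma (M - s + 1)" "rGamma (M - s - 1) = (M - s - 1) * rGamma (M - s)"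
    using rGamma_plus1[of s] rGamma_plus1[of "s - 1"] rGamma_plus1[of "M - s"] rGamma_plus1[of "M - s - 1"]
    by (simp_all add: algebra_simps)
  show "weighted_binom M \<alpha> s * (bernstein_weight M s x * (s * (s - 1))) = binom_shift M \<alpha> x (-1) s"
    "weighted_binom M \<alpha> s * (bernstein_weight M s x * (s * (M - s))) = binom_shift M \<alpha> x 0 s"
    "weighted_binom M \<alpha> s * (bernstein_weight M s x * ((M - s) * (M - s - 1))) = binom_shift M \<alpha> x 1 s"
    using assms unfolding weighted_binom_def binom_shift_def rbinom_eq_rGamma
    by (simp_all add: rG(2,4) diff_diff_eq2 add.commute[of 1]) (simp_all add: rG(1,3) mult_ac)
qed

lemma bernstein_weight_eq_exp_affine:
  "bernstein_weight M s x = exp ((ln (1 - x) - ln x) * s + M * ln x)"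
  unfolding bernstein_weight_def by (simp add: algebra_simps)

lemma log_concave_on_binom_shift:
  assumes lc: "log_concave_on {0<..<M} \<alpha>" and "0 < M" and "{lo<..<hi} \<subseteq> {0<..<M}"
    and shift: "\<forall>s\<in>{lo<..<hi}. 0 < s + a \<and> 0 < M - s - a"
  shows "log_concave_on {lo<..<hi} (binom_shift M \<alpha> x a)"
proof (rule log_concave_on_cong)
  show "log_concave_on {lo<..<hi} (\<lambda>s. \<alpha> s * Gamma (M + 1) * rGamma (1 * s + a)
      * rGamma ((- 1) * s + (M - a)) * exp ((ln (1 - x) - ln x) * s + M * ln x))"
    using assms by (intro log_concave_on_mult log_concave_on_subset[OF lc] log_concave_on_const
        log_concave_on_rGamma_affine log_concave_on_exp_affine) (auto simp: less_imp_le)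
qed (auto simp: binom_shift_def bernstein_weight_eq_exp_affine algebra_simps)

lemma binom_shift_midpoint:
  assumes lc: "log_concave_on {0<..<M} \<alpha>" and p: "1 < p" "p < M" and q: "0 < q" "q < M - 1"
  shows "binom_shift M \<alpha> x (-1) p * binom_shift M \<alpha> x 1 q \<le> (binom_shift M \<alpha> x 0 ((p + q) / 2))\<^sup>2"
proof -
  define m where "m = (p + q) / 2"
  have rGamma_lc: "log_concave_on {0<..} (\<lambda>s. rGamma (1 * s + 0))"
    by (intro log_concave_on_rGamma_affine) auto
  have "\<alpha> p * \<alpha> q \<le> (\<alpha> m)\<^sup>2"
    using log_concave_on_midpoint[OF lc] p q unfolding m_def by simp
  moreover have "rGamma (p - 1) * rGamma (q + 1) \<le> (rGamma m)\<^sup>2"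
    using log_concave_on_midpoint[OF rGamma_lc, of "p - 1" "q + 1"] p q unfolding m_def
    by (simp add: add_divide_distrib)
  moreover have "rGamma (M - p + 1) * rGamma (M - q - 1) \<le> (rGamma (M - m))\<^sup>2"
    using log_concave_on_midpoint[OF rGamma_lc, of "M - p + 1" "M - q - 1"] p q unfolding m_def
    by (simp add: field_simps)
  moreover have "bernstein_weight M p x * bernstein_weight M q x = (bernstein_weight M m x)\<^sup>2"
    unfolding m_def by (rule bernstein_weight_midpoint)
  moreover have "0 \<le> \<alpha> p" "0 \<le> \<alpha> q" "0 \<le> rGamma (p - 1)" "0 \<le> rGamma (q + 1)"
    "0 \<le> rGamma (M - p + 1)" "0 \<le> rGamma (M - q - 1)"
    using p q log_concave_on_nonneg[OF lc] by (auto simp: rGamma_inverse_Gamma less_imp_le)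
  ultimately have "(\<alpha> p * \<alpha> q) * ((rGamma (p - 1) * rGamma (q + 1)) * (rGamma (M - p + 1) * rGamma (M - q - 1)))
      * (bernstein_weight M p x * bernstein_weight M q x)
    \<le> (\<alpha> m)\<^sup>2 * ((rGamma m)\<^sup>2 * (rGamma (M - m))\<^sup>2) * (bernstein_weight M m x)\<^sup>2"
    by (intro mult_mono) auto
  then have "(Gamma (M + 1))\<^sup>2 * ((\<alpha> p * \<alpha> q) * ((rGamma (p - 1) * rGamma (q + 1))
      * (rGamma (M - p + 1) * rGamma (M - q - 1))) * (bernstein_weight M p x * bernstein_weight M q x))
    \<le> (Gamma (M + 1))\<^sup>2 * ((\<alpha> m)\<^sup>2 * ((rGamma m)\<^sup>2 * (rGamma (M - m))\<^sup>2) * (bernstein_weight M m x)\<^sup>2)"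
    by (rule mult_left_mono) simp
  then show ?thesis
    unfolding m_def[symmetric] binom_shift_def by (simp add: power2_eq_square mult_ac)
qed

context
  fixes M :: real and \<alpha> :: "real \<Rightarrow> real" and x :: real
  assumes M: "1 < M" and lc: "log_concave_on {0<..<M} \<alpha>" and x: "0 < x" "x < 1"
begin

lemma integrable_bernstein_moment:
  "continuous_on {0..M} g \<Longrightarrow> integrable lborel (\<lambda>s. weighted_binom M \<alpha> s * (bernstein_weight M s x * g s))"
  unfolding bernstein_weight_def using x
  by (intro integrable_weighted_binom_mult[OF M lc] continuous_intros) auto

lemma integrable_indicator_bernstein_moment:
  "continuous_on {0..M} g \<Longrightarrow>
    integrable lborel (\<lambda>s. indicator {a<..<b} s * (weighted_binom M \<alpha> s * (bernstein_weight M s x * g s)))"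
  using integrable_mult_indicator[where M=lborel, OF _ integrable_bernstein_moment] by simp

lemma bernstein_moment_nonneg:
  assumes "\<And>s. s \<in> {0<..<M} \<Longrightarrow> 0 \<le> g s"
  shows "0 \<le> bernstein_moment M \<alpha> x g"
  unfolding bernstein_moment_def
proof (intro integral_nonneg_AE AE_I2)
  fix s show "0 \<le> weighted_binom M \<alpha> s * (bernstein_weight M s x * g s)"
    using assms[of s] weighted_binom_nonneg[OF M lc, of s] bernstein_weight_pos[of M s x]
    by (cases "s \<in> {0<..<M}") (auto simp: weighted_binom_eq_0)
qed

lemma bernstein_moment_combination:
  assumes "\<And>s. k * g s = a * (s * (s - 1)) + b * (s * (M - s)) + c * ((M - s) * (M - s - 1))"
  shows "k * bernstein_moment M \<alpha> x g =
    a * bernstein_moment M \<alpha> x (\<lambda>s. s * (s - 1)) + b * bernstein_moment M \<alpha> x (\<lambda>s. s * (M - s))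
    + c * bernstein_moment M \<alpha> x (\<lambda>s. (M - s) * (M - s - 1))"
proof -
  have "k * bernstein_moment M \<alpha> x g = (\<integral>s. weighted_binom M \<alpha> s * (bernstein_weight M s x * (k * g s)) \<partial>lborel)"
    unfolding bernstein_moment_def by (simp add: mult_ac)
  also have "\<dots> = (\<integral>s. a * (weighted_binom M \<alpha> s * (bernstein_weight M s x * (s * (s - 1))))
      + b * (weighted_binom M \<alpha> s * (bernstein_weight M s x * (s * (M - s))))
      + c * (weighted_binom M \<alpha> s * (bernstein_weight M s x * ((M - s) * (M - s - 1)))) \<partial>lborel)"
    unfolding assms by (simp add: algebra_simps)
  also have "\<dots> = a * bernstein_moment M \<alpha> x (\<lambda>s. s * (s - 1)) + b * bernstein_moment M \<alpha> x (\<lambda>s. s * (M - s))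
    + c * bernstein_moment M \<alpha> x (\<lambda>s. (M - s) * (M - s - 1))"
    unfolding bernstein_moment_def
    by (simp add: integrable_bernstein_moment continuous_intros)
  finally show ?thesis .
qed

lemma binom_shift_nonneg:
  assumes "{lo<..<hi} \<subseteq> {0<..<M}" "\<forall>s\<in>{lo<..<hi}. 0 < s + a \<and> 0 < M - s - a"
  shows "0 \<le> indicator {lo<..<hi} s * binom_shift M \<alpha> x a s"
  using log_concave_on_nonneg[OF log_concave_on_binom_shift[OF lc _ assms], of s] M
  by (auto simp: indicator_def)

lemma indicator_mult_binom_shift_eq:
  "indicator {1<..<M} s * binom_shift M \<alpha> x (-1) s
    = indicator {1<..<M} s * (weighted_binom M \<alpha> s * (bernstein_weight M s x * (s * (s - 1))))"
  "indicator {0<..<M-1} s * binom_shift M \<alpha> x 1 s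
    = indicator {0<..<M-1} s * (weighted_binom M \<alpha> s * (bernstein_weight M s x * ((M - s) * (M - s - 1))))"
  using weighted_binom_mult_eq_binom_shift(1,3)[of s M \<alpha> x] by (auto simp: indicator_def)

lemma integrable_indicator_mult_binom_shift:
  "integrable lborel (\<lambda>s. indicator {1<..<M} s * binom_shift M \<alpha> x (-1) s)"
  "integrable lborel (\<lambda>s. indicator {0<..<M-1} s * binom_shift M \<alpha> x 1 s)"
  unfolding indicator_mult_binom_shift_eq
  by (auto intro!: integrable_indicator_bernstein_moment continuous_intros)

lemma bdd_above_indicator_bernstein_moment:
  assumes "continuous_on {0..M} P"
  shows "bdd_above (range (\<lambda>s. indicator {lo<..<hi} s * (weighted_binom M \<alpha> s * (bernstein_weight M s x * P s))))"
proof -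
  have "continuous_on {0..M} (\<lambda>s. bernstein_weight M s x * P s)"
    unfolding bernstein_weight_def using x assms by (intro continuous_intros) auto
  then obtain K where K: "\<And>s. \<bar>weighted_binom M \<alpha> s * (bernstein_weight M s x * P s)\<bar> \<le> K"
    using weighted_binom_mult_bounded[OF M lc] by blast
  have "indicator {lo<..<hi} s * (weighted_binom M \<alpha> s * (bernstein_weight M s x * P s)) \<le> K" for s
    using K[of s] abs_ge_zero[of "weighted_binom M \<alpha> s * (bernstein_weight M s x * P s)"]
    by (cases "s \<in> {lo<..<hi}") (auto dest: abs_le_D1)
  then show ?thesis by (intro bdd_aboveI2)
qed

lemma indicator_binom_shift_midpoint:
  "indicator {1<..<M} p * binom_shift M \<alpha> x (-1) p * (indicator {0<..<M-1} q * binom_shift M \<alpha> x 1 q)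
    \<le> (weighted_binom M \<alpha> ((p + q) / 2) * (bernstein_weight M ((p + q) / 2) x * ((p + q) / 2 * (M - (p + q) / 2))))\<^sup>2"
proof (cases "p \<in> {1<..<M} \<and> q \<in> {0<..<M-1}")
  case True
  then have "(p + q) / 2 \<in> {0<..<M}" by auto
  from weighted_binom_mult_eq_binom_shift(2)[OF this] True binom_shift_midpoint[OF lc, of p q x]
  show ?thesis by auto
qed auto

lemma bernstein_moment_prekopa_leindler:
  "(\<integral>s. indicator {1<..<M} s * binom_shift M \<alpha> x (-1) s \<partial>lborel)
    * (\<integral>s. indicator {0<..<M-1} s * binom_shift M \<alpha> x 1 s \<partial>lborel)
    \<le> (bernstein_moment M \<alpha> x (\<lambda>s. s * (M - s)))\<^sup>2"
  unfolding bernstein_moment_def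
proof (rule prekopa_leindler_quasiconcave[where lo=0 and hi=M])
  define f g h where
    "f = (\<lambda>s. indicator {1<..<M} s * binom_shift M \<alpha> x (-1) s)" and
    "g = (\<lambda>s. indicator {0<..<M-1} s * binom_shift M \<alpha> x 1 s)" and
    "h = (\<lambda>s. weighted_binom M \<alpha> s * (bernstein_weight M s x * (s * (M - s))))"
  have integrable: "integrable lborel f" "integrable lborel g" "integrable lborel h"
    unfolding f_def g_def h_def using integrable_indicator_mult_binom_shift
    by (auto intro!: integrable_bernstein_moment continuous_intros)
  show "integrable lborel f" "integrable lborel g" "integrable lborel h" by (fact integrable)+
  show "f \<in> borel_measurable lborel" "g \<in> borel_measurable lborel" "h \<in> borel_measurable lborel"
    using integrable by auto
  show "0 \<le> f s" "0 \<le> g s" for s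
    unfolding f_def g_def using M by (auto intro!: binom_shift_nonneg)
  show "0 \<le> h s" for s
    unfolding h_def using weighted_binom_nonneg[OF M lc, of s] bernstein_weight_pos[of M s x]
    by (cases "s \<in> {0<..<M}") (auto simp: weighted_binom_eq_0)
  show "bdd_above (range f)" "bdd_above (range g)"
    unfolding f_def g_def indicator_mult_binom_shift_eq
    by (intro bdd_above_indicator_bernstein_moment continuous_intros)+
  show "s \<in> {0..M}" if "0 < f s" for s using that unfolding f_def by (cases "s \<in> {1<..<M}") auto
  show "s \<in> {0..M}" if "0 < g s" for s using that unfolding g_def by (cases "s \<in> {0<..<M-1}") auto
  show "is_interval {s. t < f s}" "is_interval {s. t < g s}" for t
    unfolding f_def g_def using M
    by (intro is_interval_superlevel_log_concave log_concave_on_binom_shift[OF lc]; force)+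
  show "f p * g q \<le> (h ((p + q) / 2))\<^sup>2" for p q
    unfolding f_def g_def h_def by (rule indicator_binom_shift_midpoint)
qed

text \<open>The moments of \<open>s * (s - 1)\<close> and \<open>(M - s) * (M - s - 1)\<close> may be negative; only their parts
  over \<open>{1<..<M}\<close> and \<open>{0<..<M-1}\<close>, where the integrands are log-concave, enter Pr\'ekopa--Leindler.\<close>

lemma bernstein_moment_le_integral_binom_shift:
  "bernstein_moment M \<alpha> x (\<lambda>s. s * (s - 1)) \<le> (\<integral>s. indicator {1<..<M} s * binom_shift M \<alpha> x (-1) s \<partial>lborel)"
  "bernstein_moment M \<alpha> x (\<lambda>s. (M - s) * (M - s - 1)) \<le> (\<integral>s. indicator {0<..<M-1} s * binom_shift M \<alpha> x 1 s \<partial>lborel)"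
  unfolding bernstein_moment_def indicator_mult_binom_shift_eq
proof (rule_tac [!] integral_mono)
  have nonpos: "weighted_binom M \<alpha> s * (bernstein_weight M s x * p) \<le> 0" if "p \<le> 0" for s p
    using that weighted_binom_nonneg[OF M lc, of s] bernstein_weight_pos[of M s x]
    by (simp add: mult_nonneg_nonpos)
  show "weighted_binom M \<alpha> s * (bernstein_weight M s x * (s * (s - 1)))
      \<le> indicator {1<..<M} s * (weighted_binom M \<alpha> s * (bernstein_weight M s x * (s * (s - 1))))" for s
    using nonpos[of "s * (s - 1)" s]
    by (cases "s \<in> {0<..<M}") (auto simp: weighted_binom_eq_0 indicator_def mult_nonneg_nonpos)
  show "weighted_binom M \<alpha> s * (bernstein_weight M s x * ((M - s) * (M - s - 1)))
      \<le> indicator {0<..<M-1} s * (weighted_binom M \<alpha> s * (bernstein_weight M s x * ((M - s) * (M - s - 1))))"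
    for s
    using nonpos[of "(M - s) * (M - s - 1)" s]
    by (cases "s \<in> {0<..<M}") (auto simp: weighted_binom_eq_0 indicator_def mult_nonneg_nonpos)
qed (auto intro!: integrable_indicator_bernstein_moment integrable_bernstein_moment continuous_intros)

end

lemma mult_le_square_of_upper_bounds:
  fixes A B C A' C' :: real
  assumes "A \<le> A'" "C \<le> C'" "0 \<le> A'" "0 \<le> C'" "A' * C' \<le> B\<^sup>2"
    and "0 \<le> A + B" "0 \<le> C + B" "0 \<le> B"
  shows "A * C \<le> B\<^sup>2"
proof (cases "0 \<le> A \<and> 0 \<le> C")
  case True
  then have "A * C \<le> A' * C'" using assms by (intro mult_mono) auto
  then show ?thesis using assms by linarith
next
  case False
  show ?thesis
  proof (cases "A < 0 \<and> C < 0")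
    case True
    then have "(- A) * (- C) \<le> B * B" using assms by (intro mult_mono) auto
    then show ?thesis by (simp add: power2_eq_square)
  next
    case False
    with \<open>\<not> (0 \<le> A \<and> 0 \<le> C)\<close> have "A * C \<le> 0" by (auto simp: mult_le_0_iff)
    then show ?thesis by (smt (verit) zero_le_power2)
  qed
qed

lemma discriminant_inequality:
  fixes M x F0 F1 F2 A B C :: real
  assumes M: "1 < M" and x: "0 < x" "x < 1"
    and F0: "M * (M - 1) * F0 = 1 * A + 2 * B + 1 * C"
    and F1: "(M - 1) * (x * (1 - x)) * F1 = (- x) * A + (1 - 2 * x) * B + (1 - x) * C"
    and F2: "(x * (1 - x))\<^sup>2 * F2 = x\<^sup>2 * A + (- (2 * x * (1 - x))) * B + (1 - x)\<^sup>2 * C"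
    and "A * C \<le> B\<^sup>2"
  shows "F0 * F2 \<le> (M - 1) / M * F1\<^sup>2"
proof -
  define D where "D = x * (1 - x)"
  have "M * (M - 1) * D\<^sup>2 * ((M - 1) / M * F1\<^sup>2 - F0 * F2)
      = ((M - 1) * D * F1)\<^sup>2 - (M * (M - 1) * F0) * (D\<^sup>2 * F2)"
    using M by (simp add: field_simps power2_eq_square)
  also have "\<dots> = B\<^sup>2 - A * C"
    unfolding D_def F0 F1 F2 by (simp add: power2_eq_square algebra_simps)
  finally have "0 \<le> M * (M - 1) * D\<^sup>2 * ((M - 1) / M * F1\<^sup>2 - F0 * F2)"
    using \<open>A * C \<le> B\<^sup>2\<close> by simp
  moreover have "0 < M * (M - 1) * D\<^sup>2" using M x unfolding D_def by simp
  ultimately show ?thesis by (simp add: zero_le_mult_iff)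
qed

context
  fixes M :: real and \<alpha> :: "real \<Rightarrow> real" and x :: real
  assumes M: "1 < M" and lc: "log_concave_on {0<..<M} \<alpha>" and x: "0 < x" "x < 1"
begin

lemma bernstein_moment_cross_le:
  "bernstein_moment M \<alpha> x (\<lambda>s. s * (s - 1)) * bernstein_moment M \<alpha> x (\<lambda>s. (M - s) * (M - s - 1))
    \<le> (bernstein_moment M \<alpha> x (\<lambda>s. s * (M - s)))\<^sup>2"
proof (rule mult_le_square_of_upper_bounds[OF bernstein_moment_le_integral_binom_shift[OF M lc x]
      _ _ bernstein_moment_prekopa_leindler[OF M lc x]])
  show "0 \<le> (\<integral>s. indicator {1<..<M} s * binom_shift M \<alpha> x (-1) s \<partial>lborel)"
    "0 \<le> (\<integral>s. indicator {0<..<M-1} s * binom_shift M \<alpha> x 1 s \<partial>lborel)"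
    using M by (auto intro!: integral_nonneg_AE binom_shift_nonneg[OF M lc x])
  have "1 * bernstein_moment M \<alpha> x (\<lambda>s. s * (M - 1)) = 1 * bernstein_moment M \<alpha> x (\<lambda>s. s * (s - 1))
      + 1 * bernstein_moment M \<alpha> x (\<lambda>s. s * (M - s)) + 0 * bernstein_moment M \<alpha> x (\<lambda>s. (M - s) * (M - s - 1))"
    by (rule bernstein_moment_combination[OF M lc x]) (simp add: algebra_simps)
  moreover have "0 \<le> bernstein_moment M \<alpha> x (\<lambda>s. s * (M - 1))"
    using M by (intro bernstein_moment_nonneg[OF M lc x]) auto
  ultimately show "0 \<le> bernstein_moment M \<alpha> x (\<lambda>s. s * (s - 1)) + bernstein_moment M \<alpha> x (\<lambda>s. s * (M - s))"
    by simp
  have "1 * bernstein_moment M \<alpha> x (\<lambda>s. (M - s) * (M - 1)) = 0 * bernstein_moment M \<alpha> x (\<lambda>s. s * (s - 1))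
      + 1 * bernstein_moment M \<alpha> x (\<lambda>s. s * (M - s)) + 1 * bernstein_moment M \<alpha> x (\<lambda>s. (M - s) * (M - s - 1))"
    by (rule bernstein_moment_combination[OF M lc x]) (simp add: algebra_simps)
  moreover have "0 \<le> bernstein_moment M \<alpha> x (\<lambda>s. (M - s) * (M - 1))"
    using M by (intro bernstein_moment_nonneg[OF M lc x]) auto
  ultimately show "0 \<le> bernstein_moment M \<alpha> x (\<lambda>s. (M - s) * (M - s - 1)) + bernstein_moment M \<alpha> x (\<lambda>s. s * (M - s))"
    by simp
  show "0 \<le> bernstein_moment M \<alpha> x (\<lambda>s. s * (M - s))"
    by (intro bernstein_moment_nonneg[OF M lc x]) auto
qed

end

lemma constant_decomposition:
  fixes M s :: real
  shows "M * (M - 1) * 1 = 1 * (s * (s - 1)) + 2 * (s * (M - s)) + 1 * ((M - s) * (M - s - 1))"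
  by (simp add: algebra_simps)

lemma bernstein_ratio1_decomposition:
  assumes "0 < x" "x < 1"
  shows "(M - 1) * (x * (1 - x)) * bernstein_ratio1 M s x
    = (- x) * (s * (s - 1)) + (1 - 2 * x) * (s * (M - s)) + (1 - x) * ((M - s) * (M - s - 1))"
proof -
  have "x * (1 - x) * bernstein_ratio1 M s x = (1 - x) * (M - s) - x * s"
    using assms unfolding bernstein_ratio1_def by (simp add: field_simps)
  then have "(M - 1) * (x * (1 - x)) * bernstein_ratio1 M s x = (M - 1) * ((1 - x) * (M - s) - x * s)"
    by (metis mult.assoc)
  then show ?thesis by (simp add: algebra_simps)
qed

lemma bernstein_ratio2_decomposition:
  assumes "0 < x" "x < 1"
  shows "(x * (1 - x))\<^sup>2 * bernstein_ratio2 M s x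
    = x\<^sup>2 * (s * (s - 1)) + (- (2 * x * (1 - x))) * (s * (M - s)) + (1 - x)\<^sup>2 * ((M - s) * (M - s - 1))"
proof -
  have distrib: "D\<^sup>2 * (r\<^sup>2 - a - b) = (D * r)\<^sup>2 - D\<^sup>2 * a - D\<^sup>2 * b" for D r a b :: real
    by (simp add: power_mult_distrib algebra_simps)
  have "x * (1 - x) * bernstein_ratio1 M s x = (1 - x) * (M - s) - x * s"
    using assms unfolding bernstein_ratio1_def by (simp add: field_simps)
  moreover have "(x * (1 - x))\<^sup>2 * ((M - s) / x\<^sup>2) = (1 - x)\<^sup>2 * (M - s)"
    "(x * (1 - x))\<^sup>2 * (s / (1 - x)\<^sup>2) = x\<^sup>2 * s"
    using assms by (simp_all add: power_mult_distrib)
  ultimately have "(x * (1 - x))\<^sup>2 * bernstein_ratio2 M s x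
      = ((1 - x) * (M - s) - x * s)\<^sup>2 - (1 - x)\<^sup>2 * (M - s) - x\<^sup>2 * s"
    unfolding bernstein_ratio2_def distrib by simp
  then show ?thesis by (simp add: algebra_simps power2_eq_square)
qed

theorem mainTheorem2:
  fixes M :: real and \<alpha> f :: "real \<Rightarrow> real"
  assumes "M > 1"
    and "\<forall>s\<in>{0<..<M}. \<alpha> s \<ge> 0"
    and "log_concave_on {0<..<M} \<alpha>"
    and "\<forall>x\<in>{0<..<1}. f x =
           (LINT s:{0<..<M}|lborel. \<alpha> s * rbinom M s * (1 - x) powr s * x powr (M - s))"
  shows "\<forall>x\<in>{0<..<1}. (M - 1) / M * (deriv f x)\<^sup>2 \<ge> f x * deriv (deriv f) x"
proof
  fix x :: real assume x: "x \<in> {0<..<1}"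
  note M = assms(1) and lc = assms(3)
  have f: "f y = bernstein_moment M \<alpha> y (\<lambda>_. 1)" if "y \<in> {0<..<1}" for y
    using assms(4) that set_integral_eq_bernstein_moment[of y M \<alpha>] by simp
  have f': "deriv f y = bernstein_moment M \<alpha> y (\<lambda>s. bernstein_ratio1 M s y)" if "y \<in> {0<..<1}" for y
    by (rule deriv_eq_if_eq_on_open[of "{0<..<1}"])
      (use that f has_real_derivative_bernstein_moment(1)[OF M lc, of y] in auto)
  have f'': "deriv (deriv f) x = bernstein_moment M \<alpha> x (\<lambda>s. bernstein_ratio2 M s x)"
    by (rule deriv_eq_if_eq_on_open[of "{0<..<1}"])
      (use x f' has_real_derivative_bernstein_moment(2)[OF M lc, of x] in auto)
  from x have x01: "0 < x" "x < 1" by auto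
  show "(M - 1) / M * (deriv f x)\<^sup>2 \<ge> f x * deriv (deriv f) x"
    unfolding f[OF x] f'[OF x] f''
    by (rule discriminant_inequality[OF M x01
          bernstein_moment_combination[OF M lc x01 constant_decomposition]
          bernstein_moment_combination[OF M lc x01 bernstein_ratio1_decomposition[OF x01]]
          bernstein_moment_combination[OF M lc x01 bernstein_ratio2_decomposition[OF x01]]
          bernstein_moment_cross_le[OF M lc x01]])
qed

end
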